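(* Assume the vertex degrees of $G$ are uniformly bounded, let $\theta\in(0,1)$, and let $\rho=\lim_nR_n^{1/n}$. For every $\varepsilon>0$ there is $N$ such that for all $n\ge N$ and all $f\in\mathrm{Lip}_\theta$: $$\|\mathcal T^nf-\mathcal T^n\Pi_nf\|_\infty\le(\rho+\varepsilon)^n\theta^n\,\mathrm L_1(f),\qquad \|\mathcal T^nf-\mathcal T^n\Pi_nf\|_\theta\le(\rho+\varepsilon)^n\theta^n\,\mathrm L_1(f).$$
   Context: $G$ is a connected, locally finite graph (no loops, no multiple edges, every vertex of degree $\ge2$). $E$ oriented edges with $\iota,\tau$, opposite $\bar e$; turn $e\rightsquigarrow e'$ iff $\tau(e)=\iota(e')$, $e'\ne\bar e$. $P$ = infinite paths $(e_1,e_2,\dots)$ with $e_i\rightsquigarrow e_{i+1}$; $(\mathcal Tf)(e_1,\dots)=\sum_{e_0\rightsquigarrow e_1}f(e_0,e_1,\dots)$. $R_n=\sup_{e}\#\{(e_{-n},\dots,e_0): e_i\rightsquigarrow e_{i+1},\ e_0=e\}$. A postal code of length $m$ is a finite path $c=(c_1,\dots,c_m)$ with $c_i\rightsquigarrow c_{i+1}$; its district $P_c$ is the set of $p\in P$ beginning with $c$. For each $m$ and each postal code $c$ of length $m$ a point $p_c\in P_c$ is fixed, and $\Pi_m f$ is the function with $(\Pi_mf)(p)=f(p_c)$, $c$ the length-$m$ prefix of $p$. $d_\theta(p,p')=\theta^{k-1}$, $k=\min\{i:e_i\ne e'_i\}$; $\mathrm{Lip}_\theta$ = bounded $f$ uniformly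 $d_\theta$-Lipschitz on islands $\{p:\iota(e_1)=v\}$; $\mathrm L_1(f)$ = optimal Lipschitz constant over pairs with the same first edge; $\|f\|_\theta=\mathrm L_1(f)+\|f\|_\infty$. *)

theory Defs
  imports "HOL-Analysis.Analysis"
begin

text \<open>The graph G has vertex type 'v (all of UNIV) and a symmetric, irreflexive
adjacency relation adj.  Oriented edges are pairs (u,w) with adj u w;
iota e = fst e, tau e = snd e, the opposite edge of (u,w) is (w,u).
Infinite paths (e_1, e_2, ...) are encoded 0-indexed as p :: nat => 'v * 'v
(p 0 = e_1).\<close>

definition simple_graph :: "('v \<Rightarrow> 'v \<Rightarrow> bool) \<Rightarrow> bool" where
  "simple_graph adj \<longleftrightarrow> (\<forall>u w. adj u w \<longrightarrow> adj w u) \<and> (\<forall>u. \<not> adj u u)"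

definition connected_graph :: "('v \<Rightarrow> 'v \<Rightarrow> bool) \<Rightarrow> bool" where
  "connected_graph adj \<longleftrightarrow> (\<forall>u w. adj\<^sup>*\<^sup>* u w)"

definition locally_finite :: "('v \<Rightarrow> 'v \<Rightarrow> bool) \<Rightarrow> bool" where
  "locally_finite adj \<longleftrightarrow> (\<forall>v. finite {w. adj v w})"

definition min_degree_2 :: "('v \<Rightarrow> 'v \<Rightarrow> bool) \<Rightarrow> bool" where
  "min_degree_2 adj \<longleftrightarrow> (\<forall>v. card {w. adj v w} \<ge> 2)"

definition bounded_degree :: "('v \<Rightarrow> 'v \<Rightarrow> bool) \<Rightarrow> bool" where
  "bounded_degree adj \<longleftrightarrow> (\<exists>D::nat. \<forall>v. card {w. adj v w} \<le> D)"

definition is_edge :: "('v \<Rightarrow> 'v \<Rightarrow> bool) \<Rightarrow> 'v \<times> 'v \<Rightarrow> bool" where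
  "is_edge adj e \<longleftrightarrow> adj (fst e) (snd e)"

definition opp :: "'v \<times> 'v \<Rightarrow> 'v \<times> 'v" where
  "opp e = (snd e, fst e)"

definition turn :: "('v \<Rightarrow> 'v \<Rightarrow> bool) \<Rightarrow> 'v \<times> 'v \<Rightarrow> 'v \<times> 'v \<Rightarrow> bool" where
  "turn adj e e' \<longleftrightarrow> is_edge adj e \<and> is_edge adj e' \<and> snd e = fst e' \<and> e' \<noteq> opp e"

definition Paths :: "('v \<Rightarrow> 'v \<Rightarrow> bool) \<Rightarrow> (nat \<Rightarrow> 'v \<times> 'v) set" where
  "Paths adj = {p. (\<forall>i. is_edge adj (p i)) \<and> (\<forall>i. turn adj (p i) (p (Suc i)))}"

definition is_walk :: "('v \<Rightarrow> 'v \<Rightarrow> bool) \<Rightarrow> ('v \<times> 'v) list \<Rightarrow> bool" where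
  "is_walk adj c \<longleftrightarrow> (\<forall>x\<in>set c. is_edge adj x) \<and>
      (\<forall>i. Suc i < length c \<longrightarrow> turn adj (c ! i) (c ! Suc i))"

definition transfer ::
  "('v \<Rightarrow> 'v \<Rightarrow> bool) \<Rightarrow> ((nat \<Rightarrow> 'v \<times> 'v) \<Rightarrow> real) \<Rightarrow> (nat \<Rightarrow> 'v \<times> 'v) \<Rightarrow> real" where
  "transfer adj f p = (\<Sum>e\<in>{e. turn adj e (p 0)}. f (case_nat e p))"

text \<open>R_n = sup over edges e of the number of sequences (e_{-n},...,e_0) with
consecutive turns and e_0 = e (encoded as walks of length n+1 ending in e).\<close>
definition R :: "('v \<Rightarrow> 'v \<Rightarrow> bool) \<Rightarrow> nat \<Rightarrow> nat" where
  "R adj n = (SUP e\<in>{e. is_edge adj e}.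
      card {c. length c = Suc n \<and> is_walk adj c \<and> last c = e})"

definition prefix :: "nat \<Rightarrow> (nat \<Rightarrow> 'v \<times> 'v) \<Rightarrow> ('v \<times> 'v) list" where
  "prefix m p = map p [0..<m]"

definition valid_choice ::
  "('v \<Rightarrow> 'v \<Rightarrow> bool) \<Rightarrow> (('v \<times> 'v) list \<Rightarrow> (nat \<Rightarrow> 'v \<times> 'v)) \<Rightarrow> bool" where
  "valid_choice adj pc \<longleftrightarrow> (\<forall>c. is_walk adj c \<longrightarrow>
      pc c \<in> Paths adj \<and> prefix (length c) (pc c) = c)"

definition Pi_op ::
  "(('v \<times> 'v) list \<Rightarrow> (nat \<Rightarrow> 'v \<times> 'v)) \<Rightarrow> nat \<Rightarrow> ((nat \<Rightarrow> 'v \<times> 'v) \<Rightarrow> real)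
     \<Rightarrow> (nat \<Rightarrow> 'v \<times> 'v) \<Rightarrow> real" where
  "Pi_op pc m f p = f (pc (prefix m p))"

text \<open>d_theta(p,p') = theta^(k-1), k = min{i : e_i \<noteq> e'_i} (1-indexed); 0-indexed
this is theta^k with k the least index of disagreement; d(p,p) = 0.\<close>
definition dtheta :: "real \<Rightarrow> (nat \<Rightarrow> 'v \<times> 'v) \<Rightarrow> (nat \<Rightarrow> 'v \<times> 'v) \<Rightarrow> real" where
  "dtheta \<theta> p p' = (if p = p' then 0 else \<theta> ^ (LEAST i. p i \<noteq> p' i))"

definition Lip :: "('v \<Rightarrow> 'v \<Rightarrow> bool) \<Rightarrow> real \<Rightarrow> ((nat \<Rightarrow> 'v \<times> 'v) \<Rightarrow> real) set" where
  "Lip adj \<theta> = {f. (\<exists>B. \<forall>p\<in>Paths adj. \<bar>f p\<bar> \<le> B) \<and>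
      (\<exists>L. \<forall>p\<in>Paths adj. \<forall>p'\<in>Paths adj. fst (p 0) = fst (p' 0) \<longrightarrow>
            \<bar>f p - f p'\<bar> \<le> L * dtheta \<theta> p p')}"

definition L1 :: "('v \<Rightarrow> 'v \<Rightarrow> bool) \<Rightarrow> real \<Rightarrow> ((nat \<Rightarrow> 'v \<times> 'v) \<Rightarrow> real) \<Rightarrow> real" where
  "L1 adj \<theta> f = Sup ({\<bar>f p - f p'\<bar> / dtheta \<theta> p p' | p p'.
      p \<in> Paths adj \<and> p' \<in> Paths adj \<and> p 0 = p' 0 \<and> p \<noteq> p'} \<union> {0})"

definition supnorm :: "('v \<Rightarrow> 'v \<Rightarrow> bool) \<Rightarrow> ((nat \<Rightarrow> 'v \<times> 'v) \<Rightarrow> real) \<Rightarrow> real" where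
  "supnorm adj f = (SUP p\<in>Paths adj. \<bar>f p\<bar>)"

definition thetanorm :: "('v \<Rightarrow> 'v \<Rightarrow> bool) \<Rightarrow> real \<Rightarrow> ((nat \<Rightarrow> 'v \<times> 'v) \<Rightarrow> real) \<Rightarrow> real" where
  "thetanorm adj \<theta> f = L1 adj \<theta> f + supnorm adj f"

end

theory Submission
  imports Defs
begin

text \<open>
(T^n h)(p) sums h over the paths obtained by prepending to p a non-backtracking walk of
n edges that turns into the first edge of p; there are at most R_n such walks. Since f and
Pi_n f differ by at most theta^n L_1(f), this bounds the sup-norm of T^n f - T^n Pi_n f by
R_n theta^n L_1(f). For the Lipschitz part, prepending n edges to paths that agree on their
first k edges yields paths agreeing on n + k edges, on which f varies by at most
theta^(n+k) L_1(f) while Pi_n f does not vary at all; hence L_1 of the difference is again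
at most R_n theta^n L_1(f), and the theta-norm at most 2 R_n theta^n L_1(f). Finally
2 R_n \<le> (rho + epsilon)^n for large n, because the n-th roots of 2 R_n tend to rho.
\<close>

section \<open>Counting backward walks\<close>

definition walks_ending :: "('v \<Rightarrow> 'v \<Rightarrow> bool) \<Rightarrow> nat \<Rightarrow> 'v \<times> 'v \<Rightarrow> ('v \<times> 'v) list set" where
  "walks_ending adj n e = {c. length c = Suc n \<and> is_walk adj c \<and> last c = e}"

fun walk_count :: "('v \<Rightarrow> 'v \<Rightarrow> bool) \<Rightarrow> nat \<Rightarrow> 'v \<times> 'v \<Rightarrow> real" where
  "walk_count adj 0 e = 1"
| "walk_count adj (Suc n) e = (\<Sum>e'\<in>{e'. turn adj e' e}. walk_count adj n e')"

lemma is_walk_snoc: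
  "is_walk adj (c @ [e]) \<longleftrightarrow> is_walk adj c \<and> is_edge adj e \<and> (c \<noteq> [] \<longrightarrow> turn adj (last c) e)"
proof
  assume a: "is_walk adj (c @ [e])"
  have "turn adj (c ! i) (c ! Suc i)" if "Suc i < length c" for i
    using a that unfolding is_walk_def
    by (metis Suc_lessD length_append_singleton less_SucI nth_append_left)
  moreover have "turn adj (last c) e" if "c \<noteq> []"
  proof -
    obtain i where i: "length c = Suc i" using \<open>c \<noteq> []\<close> by (cases c) auto
    have "turn adj ((c @ [e]) ! i) ((c @ [e]) ! Suc i)" using a i by (simp add: is_walk_def)
    thus ?thesis using i that by (simp add: nth_append last_conv_nth)
  qed
  ultimately show "is_walk adj c \<and> is_edge adj e \<and> (c \<noteq> [] \<longrightarrow> turn adj (last c) e)"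
    using a by (auto simp: is_walk_def)
next
  assume a: "is_walk adj c \<and> is_edge adj e \<and> (c \<noteq> [] \<longrightarrow> turn adj (last c) e)"
  have "turn adj ((c @ [e]) ! i) ((c @ [e]) ! Suc i)" if i: "Suc i < length (c @ [e])" for i
  proof (cases "Suc i < length c")
    case True thus ?thesis using a by (simp add: is_walk_def nth_append)
  next
    case False
    hence "c \<noteq> []" "i = length c - 1" using i by auto
    thus ?thesis using a by (auto simp: nth_append last_conv_nth)
  qed
  thus "is_walk adj (c @ [e])" using a by (auto simp: is_walk_def)
qed

lemma walks_ending_0: "is_edge adj e \<Longrightarrow> walks_ending adj 0 e = {[e]}"
  by (auto simp: walks_ending_def is_walk_def length_Suc_conv)

lemma walks_ending_Suc:
  assumes "is_edge adj e"
  shows "walks_ending adj (Suc n) e = (\<Union>e'\<in>{e'. turn adj e' e}. (\<lambda>c. c @ [e]) ` walks_ending adj n e')"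
proof (rule set_eqI, rule iffI)
  fix x assume "x \<in> walks_ending adj (Suc n) e"
  hence len: "length x = Suc (Suc n)" and w: "is_walk adj x" and l: "last x = e"
    by (auto simp: walks_ending_def)
  define c where "c = butlast x"
  have xc: "x = c @ [e]" using len l unfolding c_def by (metis append_butlast_last_id list.size(3) nat.distinct(1))
  have "c \<noteq> []" using len unfolding c_def by (cases x rule: rev_cases) auto
  hence "c \<in> walks_ending adj n (last c)" "turn adj (last c) e"
    using w len xc is_walk_snoc[of adj c e] by (auto simp: walks_ending_def)
  thus "x \<in> (\<Union>e'\<in>{e'. turn adj e' e}. (\<lambda>c. c @ [e]) ` walks_ending adj n e')"
    using xc by blast
next
  fix x assume "x \<in> (\<Union>e'\<in>{e'. turn adj e' e}. (\<lambda>c. c @ [e]) ` walks_ending adj n e')"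
  then obtain e' c where "turn adj e' e" "c \<in> walks_ending adj n e'" "x = c @ [e]" by auto
  thus "x \<in> walks_ending adj (Suc n) e"
    using assms is_walk_snoc[of adj c e] by (auto simp: walks_ending_def)
qed

lemma turns_into_subset:
  "simple_graph adj \<Longrightarrow> {e'. turn adj e' e} \<subseteq> (\<lambda>u. (u, fst e)) ` {u. adj (fst e) u}"
  by (force simp: turn_def is_edge_def simple_graph_def)

lemma finite_turns_into:
  assumes "simple_graph adj" "locally_finite adj"
  shows "finite {e'. turn adj e' e}"
  using assms turns_into_subset[OF assms(1)]
  by (meson finite_imageI finite_subset locally_finite_def)

lemma card_turns_into_le:
  assumes "simple_graph adj" "locally_finite adj" "\<forall>v. card {w. adj v w} \<le> D"
  shows "card {e'. turn adj e' e} \<le> D"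
proof -
  have fin: "finite {u. adj (fst e) u}" using assms(2) by (simp add: locally_finite_def)
  have "card {e'. turn adj e' e} \<le> card ((\<lambda>u. (u, fst e)) ` {u. adj (fst e) u})"
    using turns_into_subset[OF assms(1)] fin by (intro card_mono) auto
  also have "\<dots> \<le> card {u. adj (fst e) u}" by (rule card_image_le[OF fin])
  also have "\<dots> \<le> D" using assms(3) by auto
  finally show ?thesis .
qed

lemma walk_count_le_power:
  assumes "simple_graph adj" "locally_finite adj" "\<forall>v. card {w. adj v w} \<le> D"
  shows "walk_count adj n e \<le> real D ^ n"
proof (induction n arbitrary: e)
  case 0 thus ?case by simp
next
  case (Suc n)
  have "walk_count adj (Suc n) e \<le> real (card {e'. turn adj e' e}) * real D ^ n"
    using Suc by (simp add: sum_bounded_above)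
  also have "\<dots> \<le> real D * real D ^ n"
    using card_turns_into_le[OF assms] by (intro mult_right_mono) auto
  finally show ?case by simp
qed

lemma card_walks_ending:
  assumes "simple_graph adj" "locally_finite adj" "is_edge adj e"
  shows "finite (walks_ending adj n e) \<and> real (card (walks_ending adj n e)) = walk_count adj n e"
  using assms(3)
proof (induction n arbitrary: e)
  case 0 thus ?case by (simp add: walks_ending_0)
next
  case (Suc n)
  let ?T = "{e'. turn adj e' e}" and ?ext = "\<lambda>e'. (\<lambda>c. c @ [e]) ` walks_ending adj n e'"
  have IH: "finite (walks_ending adj n e') \<and> real (card (walks_ending adj n e')) = walk_count adj n e'"
    if "e' \<in> ?T" for e'
    using Suc.IH that by (simp add: turn_def)
  have fin: "finite ?T" by (rule finite_turns_into[OF assms(1,2)])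
  have fin_ext: "\<forall>e'\<in>?T. finite (?ext e')" using IH by auto
  have disj: "\<forall>i\<in>?T. \<forall>j\<in>?T. i \<noteq> j \<longrightarrow> ?ext i \<inter> ?ext j = {}"
    by (auto simp: walks_ending_def)
  have "card (walks_ending adj (Suc n) e) = (\<Sum>e'\<in>?T. card (?ext e'))"
    unfolding walks_ending_Suc[OF Suc.prems] by (rule card_UN_disjoint[OF fin fin_ext disj])
  also have "\<dots> = (\<Sum>e'\<in>?T. card (walks_ending adj n e'))"
    by (intro sum.cong refl card_image) (auto simp: inj_on_def)
  finally have "real (card (walks_ending adj (Suc n) e)) = (\<Sum>e'\<in>?T. walk_count adj n e')"
    using IH by simp
  thus ?case using fin fin_ext by (simp add: walks_ending_Suc[OF Suc.prems])
qed

lemma walk_count_le_R: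
  assumes "simple_graph adj" "locally_finite adj" "bounded_degree adj" "is_edge adj e"
  shows "walk_count adj n e \<le> real (R adj n)"
proof -
  obtain D where D: "\<forall>v. card {w. adj v w} \<le> D" using assms(3) by (auto simp: bounded_degree_def)
  have "bdd_above ((\<lambda>e. card (walks_ending adj n e)) ` {e. is_edge adj e})"
  proof (rule bdd_aboveI2)
    fix e' assume "e' \<in> {e. is_edge adj e}"
    hence "real (card (walks_ending adj n e')) \<le> real D ^ n"
      using card_walks_ending[OF assms(1,2)] walk_count_le_power[OF assms(1,2) D] by simp
    thus "card (walks_ending adj n e') \<le> D ^ n" by (metis of_nat_le_iff of_nat_power)
  qed
  hence "card (walks_ending adj n e) \<le> R adj n"
    unfolding R_def walks_ending_def[symmetric] by (rule cSUP_upper[rotated]) (use assms(4) in simp)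
  thus ?thesis using card_walks_ending[OF assms(1,2,4), of n] by simp
qed

section \<open>Iterates of the transfer operator\<close>

lemma prefix_eq_iff: "prefix m p = prefix m q \<longleftrightarrow> (\<forall>i<m. p i = q i)"
  by (auto simp: prefix_def)

lemma prefix_Suc_case_nat: "prefix (Suc m) (case_nat e p) = e # prefix m p"
  by (simp add: prefix_def upt_conv_Cons map_Suc_upt[symmetric] del: upt_Suc)

lemma case_nat_in_Paths:
  assumes "p \<in> Paths adj" "turn adj e (p 0)"
  shows "case_nat e p \<in> Paths adj"
proof -
  have "is_edge adj (case_nat e p i) \<and> turn adj (case_nat e p i) (case_nat e p (Suc i))" for i
    using assms by (cases i) (auto simp: Paths_def turn_def)
  thus ?thesis by (simp add: Paths_def)
qed

lemma transfer_power_Suc: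
  "(transfer adj ^^ Suc n) f p = (\<Sum>e\<in>{e. turn adj e (p 0)}. (transfer adj ^^ n) f (case_nat e p))"
  by (simp add: transfer_def)

lemma transfer_power_diff_le:
  assumes "p \<in> Paths adj" "\<forall>q\<in>Paths adj. \<bar>f q - g q\<bar> \<le> B"
  shows "\<bar>(transfer adj ^^ n) f p - (transfer adj ^^ n) g p\<bar> \<le> walk_count adj n (p 0) * B"
  using assms(1)
proof (induction n arbitrary: p)
  case 0 thus ?case using assms(2) by simp
next
  case (Suc n)
  have "\<bar>(transfer adj ^^ Suc n) f p - (transfer adj ^^ Suc n) g p\<bar>
     \<le> (\<Sum>e\<in>{e. turn adj e (p 0)}.
           \<bar>(transfer adj ^^ n) f (case_nat e p) - (transfer adj ^^ n) g (case_nat e p)\<bar>)"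
    unfolding transfer_power_Suc sum_subtractf[symmetric] by (rule sum_abs)
  also have "\<dots> \<le> (\<Sum>e\<in>{e. turn adj e (p 0)}. walk_count adj n e * B)"
    using Suc case_nat_in_Paths[of p adj] by (intro sum_mono) fastforce
  also have "\<dots> = walk_count adj (Suc n) (p 0) * B" by (simp add: sum_distrib_right)
  finally show ?case .
qed

lemma transfer_power_oscillation_le:
  assumes "p \<in> Paths adj" "p' \<in> Paths adj" "0 < k" "prefix k p = prefix k p'"
    and "\<forall>q\<in>Paths adj. \<forall>q'\<in>Paths adj. prefix (n + k) q = prefix (n + k) q' \<longrightarrow> \<bar>h q - h q'\<bar> \<le> B"
  shows "\<bar>(transfer adj ^^ n) h p - (transfer adj ^^ n) h p'\<bar> \<le> walk_count adj n (p 0) * B"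
  using assms
proof (induction n arbitrary: p p' k)
  case 0 thus ?case by simp
next
  case (Suc n)
  have p0: "p' 0 = p 0" using Suc.prems(3,4) by (simp add: prefix_eq_iff)
  have "\<bar>(transfer adj ^^ Suc n) h p - (transfer adj ^^ Suc n) h p'\<bar>
     \<le> (\<Sum>e\<in>{e. turn adj e (p 0)}.
           \<bar>(transfer adj ^^ n) h (case_nat e p) - (transfer adj ^^ n) h (case_nat e p')\<bar>)"
    unfolding transfer_power_Suc p0 sum_subtractf[symmetric] by (rule sum_abs)
  also have "\<dots> \<le> (\<Sum>e\<in>{e. turn adj e (p 0)}. walk_count adj n e * B)"
  proof (rule sum_mono)
    fix e assume "e \<in> {e. turn adj e (p 0)}"
    hence "case_nat e p \<in> Paths adj" "case_nat e p' \<in> Paths adj"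
      using case_nat_in_Paths[of p adj e] case_nat_in_Paths[of p' adj e] Suc.prems(1,2) p0 by simp_all
    moreover have "prefix (Suc k) (case_nat e p) = prefix (Suc k) (case_nat e p')"
      using Suc.prems(4) by (simp add: prefix_Suc_case_nat)
    ultimately show "\<bar>(transfer adj ^^ n) h (case_nat e p) - (transfer adj ^^ n) h (case_nat e p')\<bar>
        \<le> walk_count adj n e * B"
      using Suc.IH[of "case_nat e p" "case_nat e p'" "Suc k"] Suc.prems(5) by simp
  qed
  also have "\<dots> = walk_count adj (Suc n) (p 0) * B" by (simp add: sum_distrib_right)
  finally show ?case .
qed

section \<open>The Lipschitz seminorm\<close>

lemma dtheta_le_if_prefix_eq:
  assumes "0 < \<theta>" "\<theta> \<le> 1" "prefix m q = prefix m q'"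
  shows "dtheta \<theta> q q' \<le> \<theta> ^ m"
proof (cases "q = q'")
  case True thus ?thesis using assms by (simp add: dtheta_def)
next
  case False
  then obtain j where "q j \<noteq> q' j" by auto
  hence "q (LEAST i. q i \<noteq> q' i) \<noteq> q' (LEAST i. q i \<noteq> q' i)" by (rule LeastI)
  hence "m \<le> (LEAST i. q i \<noteq> q' i)" using assms(3) unfolding prefix_eq_iff by (meson not_le)
  thus ?thesis using False assms(1,2) by (simp add: dtheta_def power_decreasing)
qed

lemma dtheta_eq_power_first_disagreement:
  assumes "p \<noteq> p'"
  obtains k where "dtheta \<theta> p p' = \<theta> ^ k" "prefix k p = prefix k p'" "p k \<noteq> p' k"
proof
  let ?k = "LEAST i. p i \<noteq> p' i"
  show "dtheta \<theta> p p' = \<theta> ^ ?k" using assms by (simp add: dtheta_def)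
  show "prefix ?k p = prefix ?k p'" using not_less_Least by (auto simp: prefix_eq_iff)
  obtain j where "p j \<noteq> p' j" using assms by auto
  thus "p ?k \<noteq> p' ?k" by (rule LeastI)
qed

lemma L1_bdd_above:
  assumes "f \<in> Lip adj \<theta>" "0 < \<theta>"
  shows "bdd_above ({\<bar>f p - f p'\<bar> / dtheta \<theta> p p' | p p'.
      p \<in> Paths adj \<and> p' \<in> Paths adj \<and> p 0 = p' 0 \<and> p \<noteq> p'} \<union> {0})"
proof -
  obtain L where L: "\<forall>p\<in>Paths adj. \<forall>p'\<in>Paths adj. fst (p 0) = fst (p' 0) \<longrightarrow>
      \<bar>f p - f p'\<bar> \<le> L * dtheta \<theta> p p'"
    using assms(1) by (auto simp: Lip_def)
  have "\<bar>f p - f p'\<bar> / dtheta \<theta> p p' \<le> L"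
    if "p \<in> Paths adj" "p' \<in> Paths adj" "p 0 = p' 0" "p \<noteq> p'" for p p'
  proof -
    have "\<bar>f p - f p'\<bar> \<le> L * dtheta \<theta> p p'" using L that by simp
    thus ?thesis using that(4) assms(2) by (simp add: pos_divide_le_eq dtheta_def)
  qed
  thus ?thesis by (intro bdd_aboveI[of _ "max L 0"]) fastforce
qed

lemma L1_nonneg: "f \<in> Lip adj \<theta> \<Longrightarrow> 0 < \<theta> \<Longrightarrow> 0 \<le> L1 adj \<theta> f"
  unfolding L1_def by (rule cSup_upper[OF _ L1_bdd_above]) auto

lemma abs_diff_le_L1_dtheta:
  assumes "f \<in> Lip adj \<theta>" "0 < \<theta>" "q \<in> Paths adj" "q' \<in> Paths adj" "q 0 = q' 0"
  shows "\<bar>f q - f q'\<bar> \<le> L1 adj \<theta> f * dtheta \<theta> q q'"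
proof (cases "q = q'")
  case True thus ?thesis by (simp add: dtheta_def)
next
  case False
  have "\<bar>f q - f q'\<bar> / dtheta \<theta> q q' \<le> L1 adj \<theta> f"
    unfolding L1_def by (rule cSup_upper[OF _ L1_bdd_above[OF assms(1,2)]]) (use assms False in blast)
  thus ?thesis using False assms(2) by (simp add: pos_divide_le_eq dtheta_def)
qed

lemma Lip_diff_le_if_prefix_eq:
  assumes "f \<in> Lip adj \<theta>" "0 < \<theta>" "\<theta> \<le> 1" "0 < m"
    and "q \<in> Paths adj" "q' \<in> Paths adj" "prefix m q = prefix m q'"
  shows "\<bar>f q - f q'\<bar> \<le> \<theta> ^ m * L1 adj \<theta> f"
proof -
  have "q 0 = q' 0" using assms(4,7) by (simp add: prefix_eq_iff)
  hence "\<bar>f q - f q'\<bar> \<le> L1 adj \<theta> f * dtheta \<theta> q q'"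
    using abs_diff_le_L1_dtheta assms(1,2,5,6) by blast
  also have "\<dots> \<le> L1 adj \<theta> f * \<theta> ^ m"
    using dtheta_le_if_prefix_eq[OF assms(2,3,7)] L1_nonneg[OF assms(1,2)] by (rule mult_left_mono)
  finally show ?thesis by (simp add: mult.commute)
qed

lemma L1_le:
  assumes "0 < \<theta>" "0 \<le> M"
    and "\<And>p p'. p \<in> Paths adj \<Longrightarrow> p' \<in> Paths adj \<Longrightarrow> p 0 = p' 0 \<Longrightarrow> p \<noteq> p' \<Longrightarrow>
           \<bar>g p - g p'\<bar> \<le> M * dtheta \<theta> p p'"
  shows "L1 adj \<theta> g \<le> M"
  unfolding L1_def
proof (rule cSup_least)
  fix x assume "x \<in> {\<bar>g p - g p'\<bar> / dtheta \<theta> p p' | p p'.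
      p \<in> Paths adj \<and> p' \<in> Paths adj \<and> p 0 = p' 0 \<and> p \<noteq> p'} \<union> {0}"
  thus "x \<le> M" using assms by (auto simp: pos_divide_le_eq dtheta_def)
qed auto

lemma Paths_nonempty:
  assumes "min_degree_2 adj"
  shows "Paths adj \<noteq> {}"
proof -
  have other_neighbour: "\<exists>w. adj v w \<and> w \<noteq> u" for v u
  proof (rule ccontr)
    assume "\<not> ?thesis"
    hence "card {w. adj v w} \<le> card {u}" by (intro card_mono) auto
    moreover have "2 \<le> card {w. adj v w}" using assms by (simp add: min_degree_2_def)
    ultimately show False by simp
  qed
  have extend: "\<exists>e'. turn adj e e'" if "is_edge adj e" for e
  proof -
    obtain w where "adj (snd e) w" "w \<noteq> fst e" using other_neighbour by blast
    thus ?thesis using that by (intro exI[of _ "(snd e, w)"]) (auto simp: turn_def is_edge_def opp_def)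
  qed
  obtain v w where "adj v w" using other_neighbour by blast
  hence e0: "is_edge adj (v, w)" by (simp add: is_edge_def)
  define p where "p = rec_nat (v, w) (\<lambda>_ e. SOME e'. turn adj e e')"
  have edge: "is_edge adj (p i)" for i
  proof (induction i)
    case 0 show ?case using e0 by (simp add: p_def)
  next
    case (Suc i)
    have "turn adj (p i) (p (Suc i))" using someI_ex[OF extend[OF Suc]] by (simp add: p_def)
    thus ?case by (simp add: turn_def)
  qed
  have "turn adj (p i) (p (Suc i))" for i using someI_ex[OF extend[OF edge]] by (simp add: p_def)
  hence "p \<in> Paths adj" using edge by (simp add: Paths_def)
  thus ?thesis by blast
qed

section \<open>The approximation estimates\<close>

lemma abs_diff_Pi_op_le:
  assumes "valid_choice adj pc" "f \<in> Lip adj \<theta>" "0 < \<theta>" "\<theta> \<le> 1" "0 < n" "q \<in> Paths adj"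
  shows "\<bar>f q - Pi_op pc n f q\<bar> \<le> \<theta> ^ n * L1 adj \<theta> f"
proof -
  let ?c = "prefix n q"
  have "is_walk adj ?c" using assms(6) by (auto simp: is_walk_def prefix_def Paths_def)
  hence "pc ?c \<in> Paths adj" "prefix n (pc ?c) = ?c"
    using assms(1) by (auto simp: valid_choice_def prefix_def)
  thus ?thesis unfolding Pi_op_def using Lip_diff_le_if_prefix_eq assms(2-6) by metis
qed

lemma supnorm_transfer_Pi_op_le:
  assumes "simple_graph adj" "locally_finite adj" "min_degree_2 adj" "bounded_degree adj"
    and "valid_choice adj pc" "f \<in> Lip adj \<theta>" "0 < \<theta>" "\<theta> \<le> 1" "0 < n"
  shows "supnorm adj (\<lambda>p. (transfer adj ^^ n) f p - (transfer adj ^^ n) (Pi_op pc n f) p)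
    \<le> real (R adj n) * (\<theta> ^ n * L1 adj \<theta> f)"
  unfolding supnorm_def
proof (rule cSUP_least)
  show "Paths adj \<noteq> {}" by (rule Paths_nonempty[OF assms(3)])
  fix p assume p: "p \<in> Paths adj"
  have "\<bar>(transfer adj ^^ n) f p - (transfer adj ^^ n) (Pi_op pc n f) p\<bar>
      \<le> walk_count adj n (p 0) * (\<theta> ^ n * L1 adj \<theta> f)"
    using transfer_power_diff_le[OF p] abs_diff_Pi_op_le[OF assms(5-9)] by blast
  also have "\<dots> \<le> real (R adj n) * (\<theta> ^ n * L1 adj \<theta> f)"
    using walk_count_le_R[OF assms(1,2,4)] p L1_nonneg[OF assms(6,7)] assms(7)
    by (intro mult_right_mono) (auto simp: Paths_def)
  finally show "\<bar>(transfer adj ^^ n) f p - (transfer adj ^^ n) (Pi_op pc n f) p\<bar>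
      \<le> real (R adj n) * (\<theta> ^ n * L1 adj \<theta> f)" .
qed

lemma L1_transfer_Pi_op_le:
  assumes "simple_graph adj" "locally_finite adj" "bounded_degree adj"
    and "f \<in> Lip adj \<theta>" "0 < \<theta>" "\<theta> \<le> 1"
  shows "L1 adj \<theta> (\<lambda>p. (transfer adj ^^ n) f p - (transfer adj ^^ n) (Pi_op pc n f) p)
    \<le> real (R adj n) * (\<theta> ^ n * L1 adj \<theta> f)"
proof (rule L1_le[OF assms(5)])
  have L0: "0 \<le> L1 adj \<theta> f" by (rule L1_nonneg[OF assms(4,5)])
  thus "0 \<le> real (R adj n) * (\<theta> ^ n * L1 adj \<theta> f)" using assms(5) by simp
  fix p p' assume p: "p \<in> Paths adj" and p': "p' \<in> Paths adj" and "p 0 = p' 0" "p \<noteq> p'"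
  then obtain k where d: "dtheta \<theta> p p' = \<theta> ^ k" and pre: "prefix k p = prefix k p'" and "0 < k"
    by (metis dtheta_eq_power_first_disagreement gr0I)
  have "\<bar>(transfer adj ^^ n) f p - (transfer adj ^^ n) f p'\<bar>
      \<le> walk_count adj n (p 0) * (\<theta> ^ (n + k) * L1 adj \<theta> f)"
    using transfer_power_oscillation_le[OF p p' \<open>0 < k\<close> pre]
      Lip_diff_le_if_prefix_eq[OF assms(4-6)] \<open>0 < k\<close> by simp
  moreover have "\<bar>(transfer adj ^^ n) (Pi_op pc n f) p - (transfer adj ^^ n) (Pi_op pc n f) p'\<bar>
      \<le> walk_count adj n (p 0) * 0"
  proof (rule transfer_power_oscillation_le[OF p p' \<open>0 < k\<close> pre], intro ballI impI)
    fix q q' :: "nat \<Rightarrow> 'a \<times> 'a" assume "prefix (n + k) q = prefix (n + k) q'"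
    hence "prefix n q = prefix n q'" by (simp add: prefix_eq_iff)
    thus "\<bar>Pi_op pc n f q - Pi_op pc n f q'\<bar> \<le> 0" by (simp add: Pi_op_def)
  qed
  ultimately have "\<bar>((transfer adj ^^ n) f p - (transfer adj ^^ n) (Pi_op pc n f) p) -
      ((transfer adj ^^ n) f p' - (transfer adj ^^ n) (Pi_op pc n f) p')\<bar>
      \<le> walk_count adj n (p 0) * (\<theta> ^ (n + k) * L1 adj \<theta> f)"
    by simp
  also have "\<dots> \<le> real (R adj n) * (\<theta> ^ (n + k) * L1 adj \<theta> f)"
    using walk_count_le_R[OF assms(1-3)] p L0 assms(5)
    by (intro mult_right_mono) (auto simp: Paths_def)
  finally show "\<bar>((transfer adj ^^ n) f p - (transfer adj ^^ n) (Pi_op pc n f) p) -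
      ((transfer adj ^^ n) f p' - (transfer adj ^^ n) (Pi_op pc n f) p')\<bar>
      \<le> real (R adj n) * (\<theta> ^ n * L1 adj \<theta> f) * dtheta \<theta> p p'"
    by (simp add: d power_add algebra_simps)
qed

lemma eventually_twice_le_power:
  fixes a :: "nat \<Rightarrow> real"
  assumes "(\<lambda>n. root n (a n)) \<longlonglongrightarrow> \<rho>" "0 < \<epsilon>" "\<forall>n. 0 \<le> a n"
  shows "\<exists>N>0. \<forall>n\<ge>N. 2 * a n \<le> (\<rho> + \<epsilon>) ^ n"
proof -
  have "(\<lambda>n. root n 2 * root n (a n)) \<longlonglongrightarrow> 1 * \<rho>"
    by (intro tendsto_mult LIMSEQ_root_const assms(1)) simp
  hence "eventually (\<lambda>n. root n (2 * a n) < \<rho> + \<epsilon>) sequentially"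
    using assms(2) by (simp add: real_root_mult order_tendstoD(2))
  then obtain N where N: "\<forall>n\<ge>N. root n (2 * a n) < \<rho> + \<epsilon>"
    by (auto simp: eventually_sequentially)
  have "2 * a n \<le> (\<rho> + \<epsilon>) ^ n" if n: "Suc N \<le> n" for n
  proof -
    have "2 * a n = root n (2 * a n) ^ n" using n assms(3) by (simp add: real_root_pow_pos2)
    also have "\<dots> \<le> (\<rho> + \<epsilon>) ^ n"
      using N n by (intro power_mono) (auto intro: real_root_ge_zero less_imp_le simp: assms(3))
    finally show ?thesis .
  qed
  thus ?thesis by blast
qed

theorem mainTheorem7:
  fixes adj :: "'v \<Rightarrow> 'v \<Rightarrow> bool" and \<theta> \<rho> :: real
    and pc :: "('v \<times> 'v) list \<Rightarrow> (nat \<Rightarrow> 'v \<times> 'v)"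
  assumes "simple_graph adj" and "connected_graph adj" and "locally_finite adj"
    and "min_degree_2 adj" and "bounded_degree adj"
    and "0 < \<theta>" and "\<theta> < 1"
    and "(\<lambda>n. root n (real (R adj n))) \<longlonglongrightarrow> \<rho>"
    and "valid_choice adj pc"
  shows "\<forall>\<epsilon>>0. \<exists>N. \<forall>n\<ge>N. \<forall>f\<in>Lip adj \<theta>.
     supnorm adj (\<lambda>p. (transfer adj ^^ n) f p - (transfer adj ^^ n) (Pi_op pc n f) p)
        \<le> (\<rho> + \<epsilon>) ^ n * \<theta> ^ n * L1 adj \<theta> f \<and>
     thetanorm adj \<theta> (\<lambda>p. (transfer adj ^^ n) f p - (transfer adj ^^ n) (Pi_op pc n f) p)
        \<le> (\<rho> + \<epsilon>) ^ n * \<theta> ^ n * L1 adj \<theta> f"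
proof (intro allI impI)
  fix \<epsilon> :: real assume "0 < \<epsilon>"
  then obtain N where "0 < N" and N: "\<forall>n\<ge>N. 2 * real (R adj n) \<le> (\<rho> + \<epsilon>) ^ n"
    using eventually_twice_le_power[OF assms(8)] by auto
  have "supnorm adj (\<lambda>p. (transfer adj ^^ n) f p - (transfer adj ^^ n) (Pi_op pc n f) p)
        \<le> (\<rho> + \<epsilon>) ^ n * \<theta> ^ n * L1 adj \<theta> f \<and>
     thetanorm adj \<theta> (\<lambda>p. (transfer adj ^^ n) f p - (transfer adj ^^ n) (Pi_op pc n f) p)
        \<le> (\<rho> + \<epsilon>) ^ n * \<theta> ^ n * L1 adj \<theta> f"
    if "N \<le> n" "f \<in> Lip adj \<theta>" for n f
  proof -
    let ?A = "\<theta> ^ n * L1 adj \<theta> f"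
    have "\<theta> \<le> 1" "0 < n" using assms(7) \<open>0 < N\<close> that(1) by auto
    have "0 \<le> ?A" using L1_nonneg[OF that(2) assms(6)] assms(6) by simp
    have "2 * (real (R adj n) * ?A) \<le> (\<rho> + \<epsilon>) ^ n * ?A"
      using mult_right_mono[OF N[rule_format, OF that(1)] \<open>0 \<le> ?A\<close>] by (simp add: mult.assoc)
    moreover have "0 \<le> real (R adj n) * ?A" using \<open>0 \<le> ?A\<close> by simp
    moreover note
      supnorm_transfer_Pi_op_le[OF assms(1,3,4,5,9) that(2) assms(6) \<open>\<theta> \<le> 1\<close> \<open>0 < n\<close>]
      L1_transfer_Pi_op_le[OF assms(1,3,5) that(2) assms(6) \<open>\<theta> \<le> 1\<close>, of n pc]
    ultimately show ?thesis unfolding thetanorm_def mult.assoc by linarith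
  qed
  thus "\<exists>N. \<forall>n\<ge>N. \<forall>f\<in>Lip adj \<theta>.
     supnorm adj (\<lambda>p. (transfer adj ^^ n) f p - (transfer adj ^^ n) (Pi_op pc n f) p)
        \<le> (\<rho> + \<epsilon>) ^ n * \<theta> ^ n * L1 adj \<theta> f \<and>
     thetanorm adj \<theta> (\<lambda>p. (transfer adj ^^ n) f p - (transfer adj ^^ n) (Pi_op pc n f) p)
        \<le> (\<rho> + \<epsilon>) ^ n * \<theta> ^ n * L1 adj \<theta> f" by blast
qed

end
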